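(* There exists an absolute constant $C$ such that the following holds. Let $\lambda_1\ge\lambda_2\ge\dots\ge\lambda_d>0$, and for $t\in\mathbb R^d$ let $\|t\|_{SLOPE}=\sum_{j=1}^d\lambda_jt_j^*$, where $t_1^*\ge\dots\ge t_d^*\ge0$ is the non-increasing rearrangement of $(|t_i|)_{i=1}^d$. Let $\mathcal B=\{t\in\mathbb R^d:\|t\|_{SLOPE}\le1\}$ and $M=\max_{1\le j\le d}\lambda_j^{-1}\sqrt{\log(ed/j)}$. Then $\ell^*(\mathcal B)\le CM$.
   Context: $\ell^*(\mathcal B)=\mathbb E\sup_{t\in\mathcal B}\langle G,t\rangle$ with $G$ a standard Gaussian vector in $\mathbb R^d$. *)

theory Defs
  imports "HOL-Probability.Probability"
begin

text \<open>Vectors in R^d are functions nat => real, with coordinates indexed by 1..d.\<close>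

definition rearr :: "nat \<Rightarrow> (nat \<Rightarrow> real) \<Rightarrow> nat \<Rightarrow> real" where
  "rearr d t j = rev (sort (map (\<lambda>i. \<bar>t i\<bar>) [1..<Suc d])) ! (j - 1)"

definition slope_norm :: "nat \<Rightarrow> (nat \<Rightarrow> real) \<Rightarrow> (nat \<Rightarrow> real) \<Rightarrow> real" where
  "slope_norm d lam t = (\<Sum>j=1..d. lam j * rearr d t j)"

definition slope_ball :: "nat \<Rightarrow> (nat \<Rightarrow> real) \<Rightarrow> (nat \<Rightarrow> real) set" where
  "slope_ball d lam = {t \<in> PiE {1..d} (\<lambda>_. UNIV). slope_norm d lam t \<le> 1}"

definition gauss :: "nat \<Rightarrow> (nat \<Rightarrow> real) measure" where
  "gauss d = PiM {1..d} (\<lambda>_. density lborel std_normal_density)"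

text \<open>Gaussian mean width ell^*(B) = E sup_{t in B} <G,t>, as a nonnegative integral
  (the supremum is nonnegative whenever 0 is in B).\<close>
definition ell_star :: "nat \<Rightarrow> (nat \<Rightarrow> real) set \<Rightarrow> ennreal" where
  "ell_star d B = (\<integral>\<^sup>+ g. (SUP t\<in>B. ennreal (\<Sum>i=1..d. g i * t i)) \<partial>gauss d)"

definition slope_M :: "nat \<Rightarrow> (nat \<Rightarrow> real) \<Rightarrow> real" where
  "slope_M d lam = Max ((\<lambda>j. sqrt (ln (exp 1 * real d / real j)) / lam j) ` {1..d})"

end

theory Submission imports Defs "HOL-Combinatorics.Permutations" begin

text \<open>Put \<open>L\<^sub>j = ln (e d / j) \<ge> 1\<close>, so that \<open>exp (-L\<^sub>j) = j / (e d)\<close>. An elementary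
  estimate gives \<open>|x| \<le> 2 \<surd>L + 2 \<surd>L exp (x\<^sup>2/4 - L)\<close> for \<open>L \<ge> 1\<close>. Apply it at level \<open>L\<^sub>j\<close>
  to the coordinate of \<open>G\<close> that carries the \<open>j\<close>-th largest \<open>|t\<^sub>i|\<close>. Since \<open>\<surd>L\<^sub>j \<le> M \<lambda>\<^sub>j\<close> and
  \<open>j \<lambda>\<^sub>j t\<^sup>*\<^sub>j \<le> \<parallel>t\<parallel> \<le> 1\<close>, this gives, uniformly on the ball,
  \<open>\<langle>G,t\<rangle> \<le> 2M + 2M/(e d) \<Sum>\<^sub>i exp (G\<^sub>i\<^sup>2/4)\<close>. As \<open>E exp (G\<^sub>i\<^sup>2/4) = \<surd>2\<close>, taking
  expectations yields \<open>2M (1 + \<surd>2/e) \<le> 4M\<close>.\<close>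

lemma nn_integral_std_normal_exp_square_div_4:
  "(\<integral>\<^sup>+ x. ennreal (exp (x\<^sup>2/4)) \<partial>density lborel std_normal_density) = ennreal (sqrt 2)"
proof -
  have density_eq: "std_normal_density x * exp (x\<^sup>2/4) = sqrt 2 * normal_density 0 (sqrt 2) x" for x
  proof -
    have "exp (- x\<^sup>2 / 2) * exp (x\<^sup>2/4) = exp (-x\<^sup>2/4)" by (simp flip: exp_add)
    moreover have "sqrt (2*pi*(sqrt 2)\<^sup>2) = sqrt 2 * sqrt (2*pi)"
      by (simp add: real_sqrt_mult)
    ultimately show ?thesis unfolding std_normal_density_def normal_density_def
      by (simp add: field_simps)
  qed
  have "(\<integral>\<^sup>+ x. ennreal (exp (x\<^sup>2/4)) \<partial>density lborel std_normal_density)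
      = (\<integral>\<^sup>+ x. ennreal (sqrt 2) * ennreal (normal_density 0 (sqrt 2) x) \<partial>lborel)"
    by (subst nn_integral_density) (auto intro!: nn_integral_cong simp: density_eq simp flip: ennreal_mult')
  also have "\<dots> = ennreal (sqrt 2) * (\<integral>\<^sup>+ x. ennreal (normal_density 0 (sqrt 2) x) \<partial>lborel)"
    by (subst nn_integral_cmult) auto
  also have "(\<integral>\<^sup>+ x. ennreal (normal_density 0 (sqrt 2) x) \<partial>lborel) = 1"
    by (subst nn_integral_eq_integral) auto
  finally show ?thesis by simp
qed

lemma prob_space_std_normal: "prob_space (density lborel std_normal_density)"
  using prob_space_normal_density[of 1 0] by simp

lemma prob_space_gauss: "prob_space (gauss d)"
  unfolding gauss_def by (rule prob_space_PiM) (rule prob_space_std_normal)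

lemma measurable_gauss_component:
  assumes "i \<in> {1..d}"
  shows "(\<lambda>g. g i) \<in> measurable (gauss d) (density lborel std_normal_density)"
  unfolding gauss_def by (rule measurable_component_singleton[OF assms])

lemma nn_integral_gauss_exp_square_div_4:
  assumes "i \<in> {1..d}"
  shows "(\<integral>\<^sup>+ g. ennreal (exp ((g i)\<^sup>2/4)) \<partial>gauss d) = ennreal (sqrt 2)"
proof -
  have "(\<integral>\<^sup>+ g. ennreal (exp ((g i)\<^sup>2/4)) \<partial>gauss d)
     = (\<integral>\<^sup>+ x. ennreal (exp (x\<^sup>2/4)) \<partial>distr (gauss d) (density lborel std_normal_density) (\<lambda>g. g i))"
    using measurable_gauss_component[OF assms] by (subst nn_integral_distr) auto
  also have "distr (gauss d) (density lborel std_normal_density) (\<lambda>g. g i)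
      = density lborel std_normal_density"
    unfolding gauss_def by (rule distr_PiM_component[OF prob_space_std_normal assms])
  finally show ?thesis using nn_integral_std_normal_exp_square_div_4 by simp
qed

lemma nn_integral_gauss_affine_exp_square_div_4:
  assumes "0 \<le> a" "0 \<le> c"
  shows "(\<integral>\<^sup>+ g. ennreal (a + c * (\<Sum>i=1..d. exp ((g i)\<^sup>2/4))) \<partial>gauss d)
    = ennreal (a + c * d * sqrt 2)"
proof -
  interpret prob_space "gauss d" by (rule prob_space_gauss)
  have meas_exp: "(\<lambda>g. ennreal (exp ((g i)\<^sup>2/4))) \<in> borel_measurable (gauss d)"
    if "i \<in> {1..d}" for i
  proof -
    have "(\<lambda>g. g i) \<in> borel_measurable (gauss d)"
      using measurable_gauss_component[OF that] by simp
    then show ?thesis by measurable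
  qed
  then have meas: "(\<lambda>g. ennreal c * ennreal (exp ((g i)\<^sup>2/4))) \<in> borel_measurable (gauss d)"
    if "i \<in> {1..d}" for i
    using that by measurable
  have split: "ennreal (a + c * (\<Sum>i=1..d. exp ((g i)\<^sup>2/4)))
      = ennreal a + (\<Sum>i=1..d. ennreal c * ennreal (exp ((g i)\<^sup>2/4)))" for g
    using assms by (simp add: ennreal_plus sum_nonneg ennreal_mult flip: sum_ennreal sum_distrib_left)
  have "(\<integral>\<^sup>+ g. ennreal (a + c * (\<Sum>i=1..d. exp ((g i)\<^sup>2/4))) \<partial>gauss d)
      = ennreal a + (\<integral>\<^sup>+ g. (\<Sum>i=1..d. ennreal c * ennreal (exp ((g i)\<^sup>2/4))) \<partial>gauss d)"
    unfolding split using meas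
    by (subst nn_integral_add) (auto intro: borel_measurable_sum simp: emeasure_space_1)
  also have "\<dots> = ennreal a + (\<Sum>i=1..d. \<integral>\<^sup>+ g. ennreal c * ennreal (exp ((g i)\<^sup>2/4)) \<partial>gauss d)"
    using meas by (subst nn_integral_sum) auto
  also have "\<dots> = ennreal a + (\<Sum>i=1..d. ennreal c * (\<integral>\<^sup>+ g. ennreal (exp ((g i)\<^sup>2/4)) \<partial>gauss d))"
    using meas_exp by (intro arg_cong2[where f="(+)"] sum.cong refl nn_integral_cmult) auto
  also have "\<dots> = ennreal a + (\<Sum>i=1..d. ennreal (c * sqrt 2))"
    using assms by (simp add: nn_integral_gauss_exp_square_div_4 ennreal_mult')
  also have "\<dots> = ennreal (a + c * d * sqrt 2)"
    using assms by (simp add: ennreal_plus ennreal_of_nat_eq_real_of_nat ennreal_mult' mult_ac)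
  finally show ?thesis .
qed

lemma rearr_eq_abs_permuted:
  obtains \<pi> where "bij_betw \<pi> {1..d} {1..d}" "\<And>j. j \<in> {1..d} \<Longrightarrow> rearr d t j = \<bar>t (\<pi> j)\<bar>"
proof -
  define xs where "xs = map (\<lambda>i. \<bar>t i\<bar>) [1..<Suc d]"
  have len: "length (rev (sort xs)) = d" "length xs = d" by (auto simp: xs_def)
  have "mset (rev (sort xs)) = mset xs" by simp
  then obtain p where p: "p permutes {..<length xs}" "permute_list p xs = rev (sort xs)"
    by (metis mset_eq_permutation)
  have p_d: "p permutes {..<d}" using p len by simp
  have "bij_betw (Suc \<circ> (p \<circ> (\<lambda>j. j - 1))) {1..d} {1..d}"
  proof (rule bij_betw_trans[OF bij_betw_trans[OF _ permutes_imp_bij[OF p_d]]])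
    show "bij_betw (\<lambda>j. j - 1) {1..d} {..<d}"
      by (rule bij_betw_byWitness[where f'=Suc]) auto
    show "bij_betw Suc {..<d} {1..d}"
      by (rule bij_betw_byWitness[where f'="\<lambda>j. j - 1"]) auto
  qed
  moreover have "rearr d t j = \<bar>t ((Suc \<circ> (p \<circ> (\<lambda>j. j - 1))) j)\<bar>" if "j \<in> {1..d}" for j
  proof -
    have j: "j - 1 < d" using that by auto
    then have "p (j - 1) < d" using permutes_in_image[OF p_d] by simp
    moreover have "rearr d t j = xs ! p (j - 1)"
      unfolding rearr_def using p j len by (metis xs_def permute_list_nth)
    ultimately show ?thesis by (simp add: xs_def del: upt_Suc)
  qed
  ultimately show ?thesis using that by blast
qed

lemma rearr_nonneg: "j \<in> {1..d} \<Longrightarrow> 0 \<le> rearr d t j"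
  by (metis abs_ge_zero rearr_eq_abs_permuted)

lemma rearr_antimono:
  assumes "1 \<le> a" "a \<le> b" "b \<le> d"
  shows "rearr d t b \<le> rearr d t a"
proof -
  define xs where "xs = map (\<lambda>i. \<bar>t i\<bar>) [1..<Suc d]"
  have len: "length (sort xs) = d" by (simp add: xs_def)
  have "sort xs ! (d - Suc (b - 1)) \<le> sort xs ! (d - Suc (a - 1))"
    by (rule sorted_nth_mono) (use assms len in auto)
  then show ?thesis unfolding rearr_def using assms len by (simp add: rev_nth xs_def)
qed

lemma antimono_on_interval_Suc:
  fixes f :: "nat \<Rightarrow> 'a::order"
  assumes "\<forall>j\<in>{1..<d}. f (Suc j) \<le> f j" "1 \<le> a" "a \<le> b" "b \<le> d"
  shows "f b \<le> f a"
  using assms(3,4)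
proof (induction b rule: dec_induct)
  case (step n)
  then have "f (Suc n) \<le> f n" using assms(1,2) by auto
  with step show ?case by simp
qed simp

lemma index_mult_slope_term_le_slope_norm:
  assumes antimono: "\<forall>j\<in>{1..<d}. lam (Suc j) \<le> lam j" and pos: "\<forall>j\<in>{1..d}. lam j > 0"
    and j: "j \<in> {1..d}"
  shows "j * (lam j * rearr d t j) \<le> slope_norm d lam t"
proof -
  have "j * (lam j * rearr d t j) = (\<Sum>i=1..j. lam j * rearr d t j)" by simp
  also have "\<dots> \<le> (\<Sum>i=1..j. lam i * rearr d t i)"
  proof (rule sum_mono)
    fix i assume i: "i \<in> {1..j}"
    have "lam j \<le> lam i" using antimono_on_interval_Suc[OF antimono, of i j] i j by auto
    moreover have "rearr d t j \<le> rearr d t i" using rearr_antimono[of i j d t] i j by auto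
    ultimately show "lam j * rearr d t j \<le> lam i * rearr d t i"
      using pos i j rearr_nonneg[OF j] by (intro mult_mono) (auto intro: less_imp_le)
  qed
  also have "\<dots> \<le> (\<Sum>i=1..d. lam i * rearr d t i)"
  proof (rule sum_mono2)
    fix i assume "i \<in> {1..d} - {1..j}"
    then show "0 \<le> lam i * rearr d t i" using pos rearr_nonneg[of i d t] by (simp add: less_imp_le)
  qed (use j in auto)
  finally show ?thesis by (simp add: slope_norm_def)
qed

lemma le_sqrt_plus_exp_square_bound:
  fixes x L :: real
  assumes x: "0 \<le> x" and L: "1 \<le> L"
  shows "x \<le> 2 * sqrt L + 2 * sqrt L * exp (x\<^sup>2/4 - L)"
proof (cases "x \<le> 2 * sqrt L")
  case True
  then show ?thesis using L by (simp add: add_increasing2)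
next
  case False
  have sqrt_L: "sqrt L > 0" "sqrt L ^ 2 = L" using L by auto
  have "(2 * sqrt L)\<^sup>2 \<le> x\<^sup>2" using False sqrt_L by (intro power_mono) auto
  then have x2: "4 * L \<le> x\<^sup>2" using sqrt_L by (simp add: power_mult_distrib)
  \<comment> \<open>\<open>L \<ge> 1\<close> and \<open>u = x\<^sup>2/(4L) \<ge> 1\<close> give \<open>x\<^sup>2/4 - L = L (u - 1) \<ge> u - 1\<close>, and \<open>exp (u - 1) \<ge> u\<close>.\<close>
  have "x\<^sup>2/(4*L) - 1 \<le> L * (x\<^sup>2/(4*L) - 1)"
    using x2 L mult_right_mono[of 1 L "x\<^sup>2/(4*L) - 1"] by (simp add: field_simps)
  also have "\<dots> = x\<^sup>2/4 - L" using L by (simp add: field_simps)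
  finally have "x\<^sup>2/(4*L) \<le> exp (x\<^sup>2/4 - L)"
    using exp_ge_add_one_self[of "x\<^sup>2/4 - L"] by linarith
  have "x \<le> x * (x / (2 * sqrt L))" using False sqrt_L x by (simp add: field_simps mult_left_mono)
  also have "\<dots> = 2 * sqrt L * (x\<^sup>2/(4*L))" using sqrt_L by (simp add: field_simps power2_eq_square)
  also have "\<dots> \<le> 2 * sqrt L * exp (x\<^sup>2/4 - L)"
    using \<open>x\<^sup>2/(4*L) \<le> exp (x\<^sup>2/4 - L)\<close> sqrt_L by (intro mult_left_mono) auto
  finally show ?thesis using sqrt_L by (simp add: add_increasing)
qed

lemma one_le_ln_exp_mult_div:
  fixes j d :: nat
  assumes "j \<in> {1..d}"
  shows "1 \<le> ln (exp 1 * d / j)"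
proof -
  have "exp 1 \<le> exp 1 * d / j" using assms by (simp add: le_divide_eq)
  then have "ln (exp 1) \<le> ln (exp 1 * d / j)" using assms by (subst ln_le_cancel_iff) auto
  then show ?thesis by simp
qed

lemma sqrt_ln_le_slope_M_mult:
  assumes pos: "\<forall>j\<in>{1..d}. lam j > 0" and j: "j \<in> {1..d}"
  shows "sqrt (ln (exp 1 * d / j)) \<le> slope_M d lam * lam j"
proof -
  have "sqrt (ln (exp 1 * d / j)) / lam j \<le> slope_M d lam"
    unfolding slope_M_def by (rule Max_ge) (use j in auto)
  then show ?thesis using pos j by (simp add: pos_divide_le_eq)
qed

lemma slope_M_nonneg:
  assumes "d \<ge> 1" and pos: "\<forall>j\<in>{1..d}. lam j > 0"
  shows "0 \<le> slope_M d lam"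
proof -
  have "1 \<le> ln (exp 1 * d / real (1::nat))"
    using one_le_ln_exp_mult_div[of 1 d] assms(1) by simp
  then have "0 \<le> sqrt (ln (exp 1 * d / real (1::nat)))"
    by (intro real_sqrt_ge_zero) linarith
  also have "\<dots> \<le> slope_M d lam * lam 1"
    using sqrt_ln_le_slope_M_mult[OF pos, of 1] assms(1) by simp
  finally have "0 \<le> slope_M d lam * lam 1" .
  moreover have "0 < lam 1" using pos assms(1) by simp
  ultimately show ?thesis by (simp add: zero_le_mult_iff)
qed

lemma abs_mult_le_slope_term_bound:
  fixes x r M l :: real and j d :: nat
  assumes j: "j \<in> {1..d}" and r: "0 \<le> r" and M: "0 \<le> M"
    and sqrt_le: "sqrt (ln (exp 1 * d / j)) \<le> M * l" and term_le: "j * (l * r) \<le> 1"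
  shows "\<bar>x\<bar> * r \<le> 2 * M * (l * r) + 2 * M / (exp 1 * d) * exp (x\<^sup>2/4)"
proof -
  define L where "L = ln (exp 1 * d / j)"
  have exp_L: "exp (x\<^sup>2/4 - L) = j / (exp 1 * d) * exp (x\<^sup>2/4)"
    using j by (simp add: L_def exp_diff)
  have "\<bar>x\<bar> * r \<le> (2 * sqrt L + 2 * sqrt L * exp (x\<^sup>2/4 - L)) * r"
    using le_sqrt_plus_exp_square_bound[OF abs_ge_zero one_le_ln_exp_mult_div[OF j]] r
    by (intro mult_right_mono) (auto simp: L_def)
  also have "\<dots> = 2 * (sqrt L * r) + 2 * (sqrt L * r * j) / (exp 1 * d) * exp (x\<^sup>2/4)"
    unfolding exp_L by (simp add: field_simps)
  also have "\<dots> \<le> 2 * (M * (l * r)) + 2 * M / (exp 1 * d) * exp (x\<^sup>2/4)"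
  proof -
    have "sqrt L * r \<le> M * (l * r)"
      using mult_right_mono[OF sqrt_le r] by (simp add: L_def mult_ac)
    moreover have "M * (l * r) * j \<le> M"
      using mult_left_mono[OF term_le M] by (simp add: mult_ac)
    moreover have "sqrt L * r * j \<le> M * (l * r) * j"
      using calculation(1) by (intro mult_right_mono) auto
    ultimately show ?thesis
      by (intro add_mono mult_left_mono mult_right_mono divide_right_mono) auto
  qed
  finally show ?thesis by simp
qed

lemma inner_le_slope_M_bound:
  fixes g t lam :: "nat \<Rightarrow> real"
  assumes d: "d \<ge> 1" and antimono: "\<forall>j\<in>{1..<d}. lam (Suc j) \<le> lam j"
    and pos: "\<forall>j\<in>{1..d}. lam j > 0" and t: "slope_norm d lam t \<le> 1"
  shows "(\<Sum>i=1..d. g i * t i)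
    \<le> 2 * slope_M d lam + 2 * slope_M d lam / (exp 1 * d) * (\<Sum>i=1..d. exp ((g i)\<^sup>2/4))"
proof -
  define M where "M = slope_M d lam"
  define c where "c = 2 * M / (exp 1 * d)"
  define \<psi> where "\<psi> i = exp ((g i)\<^sup>2/4)" for i
  obtain \<pi> where \<pi>: "bij_betw \<pi> {1..d} {1..d}" "\<And>j. j \<in> {1..d} \<Longrightarrow> rearr d t j = \<bar>t (\<pi> j)\<bar>"
    using rearr_eq_abs_permuted by blast
  have M: "0 \<le> M" unfolding M_def by (rule slope_M_nonneg[OF d pos])
  have "(\<Sum>i=1..d. g i * t i) \<le> (\<Sum>i=1..d. \<bar>g i\<bar> * \<bar>t i\<bar>)"
    by (rule sum_mono) (metis abs_ge_self abs_mult)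
  also have "\<dots> = (\<Sum>j=1..d. \<bar>g (\<pi> j)\<bar> * rearr d t j)"
    using sum.reindex_bij_betw[OF \<pi>(1), of "\<lambda>i. \<bar>g i\<bar> * \<bar>t i\<bar>"] \<pi>(2) by simp
  also have "\<dots> \<le> (\<Sum>j=1..d. 2 * M * (lam j * rearr d t j) + c * \<psi> (\<pi> j))"
  proof (rule sum_mono)
    fix j assume j: "j \<in> {1..d}"
    have "j * (lam j * rearr d t j) \<le> 1"
      using index_mult_slope_term_le_slope_norm[OF antimono pos j, of t] t by linarith
    then show "\<bar>g (\<pi> j)\<bar> * rearr d t j \<le> 2 * M * (lam j * rearr d t j) + c * \<psi> (\<pi> j)"
      unfolding c_def \<psi>_def M_def
      using abs_mult_le_slope_term_bound[OF j rearr_nonneg[OF j] M[unfolded M_def]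
          sqrt_ln_le_slope_M_mult[OF pos j]] by blast
  qed
  also have "\<dots> = 2 * M * slope_norm d lam t + c * (\<Sum>i=1..d. \<psi> i)"
    using sum.reindex_bij_betw[OF \<pi>(1), of \<psi>]
    by (simp add: slope_norm_def sum.distrib flip: sum_distrib_left)
  also have "\<dots> \<le> 2 * M + c * (\<Sum>i=1..d. \<psi> i)"
    using mult_left_mono[OF t, of "2 * M"] M by simp
  finally show ?thesis by (simp add: M_def c_def \<psi>_def)
qed

theorem proposition5p11:
  shows "\<exists>C::real. \<forall>(d::nat) (lam::nat \<Rightarrow> real).
     d \<ge> 1 \<longrightarrow> (\<forall>j\<in>{1..<d}. lam (Suc j) \<le> lam j) \<longrightarrow> (\<forall>j\<in>{1..d}. lam j > 0) \<longrightarrow>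
     ell_star d (slope_ball d lam) \<le> ennreal (C * slope_M d lam)"
proof (intro exI[of _ 4] allI impI)
  fix d :: nat and lam :: "nat \<Rightarrow> real"
  assume d: "d \<ge> 1" and antimono: "\<forall>j\<in>{1..<d}. lam (Suc j) \<le> lam j"
    and pos: "\<forall>j\<in>{1..d}. lam j > 0"
  define M where "M = slope_M d lam"
  have M: "0 \<le> M" unfolding M_def by (rule slope_M_nonneg[OF d pos])
  have "ell_star d (slope_ball d lam)
      \<le> (\<integral>\<^sup>+ g. ennreal (2 * M + 2 * M / (exp 1 * d) * (\<Sum>i=1..d. exp ((g i)\<^sup>2/4))) \<partial>gauss d)"
    unfolding ell_star_def slope_ball_def M_def
    using inner_le_slope_M_bound[OF d antimono pos]
    by (intro nn_integral_mono SUP_least ennreal_leI) blast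
  also have "\<dots> = ennreal (2 * M + 2 * M / (exp 1 * d) * d * sqrt 2)"
    using M by (intro nn_integral_gauss_affine_exp_square_div_4) auto
  also have "\<dots> \<le> ennreal (4 * M)"
  proof (rule ennreal_leI)
    have "sqrt 2 \<le> exp (1::real)"
      using real_sqrt_le_mono[of 2 4] exp_ge_add_one_self[of 1] by simp
    then have "2 * M / (exp 1 * d) * d * sqrt 2 \<le> 2 * M"
      using d M by (simp add: field_simps mult_left_mono)
    then show "2 * M + 2 * M / (exp 1 * d) * d * sqrt 2 \<le> 4 * M" by simp
  qed
  finally show "ell_star d (slope_ball d lam) \<le> ennreal (4 * slope_M d lam)"
    by (simp add: M_def)
qed

end
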